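(* Let $\mathbf G=(G,\le,\cdot,/,0,1)$ be a left-residuated po-groupoid satisfying the double negation law $\neg\neg x=x$ and the equation $(x\to y)\to y=(y\to x)\to x$ for all $x,y\in G$. Then $(G,\le)$ is a join-semilattice in which $x\vee y=(x\to y)\to y$ for all $x,y$. Moreover, for every $a\in G$, the map $\gamma_a\colon[a)\to[a)$, $\gamma_a(x)=x\to a$, is a well-defined antitone involution on the principal filter $[a)=\{x\in G: a\le x\}$ (i.e. $x\le y$ implies $\gamma_a(y)\le\gamma_a(x)$, and $\gamma_a(\gamma_a(x))=x$).
   Context: A (bounded integral) left-residuated po-groupoid is a structure $\mathbf G=(G,\le,\cdot,/,0,1)$ where $(G,\le,0,1)$ is a bounded poset with least element $0$ and greatest element $1$, $\cdot$ is a binary operation on $G$ with $1\cdot x=x\cdot 1=x$ for all $x$ (no associativity, commutativity or monotonicity is assumed), and $/$ is a binary operation on $G$ satisfying the left residuation law: for all $x,y,z\in G$, $x\cdot y\le z\iff x\le z/y$. The negation is defined by $\neg x:=0/x$ and the implication by $x\to y:=\neg x/\neg y$. *)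

theory Defs
  imports Main
begin

text \<open>A bounded integral left-residuated po-groupoid on the partially ordered type 'a,
  with multiplication m, left residual r (x / y = r x y), least element z (= 0)
  and greatest element u (= 1).\<close>
definition left_res_pogroupoid ::
  "('a::order \<Rightarrow> 'a \<Rightarrow> 'a) \<Rightarrow> ('a \<Rightarrow> 'a \<Rightarrow> 'a) \<Rightarrow> 'a \<Rightarrow> 'a \<Rightarrow> bool" where
  "left_res_pogroupoid m r z u \<longleftrightarrow>
     (\<forall>x. z \<le> x \<and> x \<le> u) \<and>
     (\<forall>x. m u x = x \<and> m x u = x) \<and>
     (\<forall>x y w. m x y \<le> w \<longleftrightarrow> x \<le> r w y)"

definition neg :: "('a \<Rightarrow> 'a \<Rightarrow> 'a) \<Rightarrow> 'a \<Rightarrow> 'a \<Rightarrow> 'a" where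
  "neg r z x = r z x"

definition imp :: "('a \<Rightarrow> 'a \<Rightarrow> 'a) \<Rightarrow> 'a \<Rightarrow> 'a \<Rightarrow> 'a \<Rightarrow> 'a" where
  "imp r z x y = r (neg r z x) (neg r z y)"

end

theory Submission
  imports Defs
begin

text \<open>Specialising the commutation law to \<open>\<not>y, \<not>x\<close> and using \<open>\<not>\<not> = id\<close> gives
  \<open>\<not>(y/x) / x = \<not>(x/y) / y\<close>; for \<open>x \<le> y\<close> the left side is \<open>\<not>x\<close> and the right side
  dominates \<open>\<not>y\<close>, so negation is antitone. Hence \<open>\<rightarrow>\<close> is antitone in its first argument,
  \<open>x \<rightarrow> y = 1\<close> whenever \<open>x \<le> y\<close>, and \<open>1 \<rightarrow> a = a\<close>. The commutation law then yields
  \<open>(x \<rightarrow> a) \<rightarrow> a = (a \<rightarrow> x) \<rightarrow> x = 1 \<rightarrow> x = x\<close> on \<open>[a)\<close>, and the join property follows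
  by applying this antitone involution twice.\<close>

locale left_res_pogroupoid_on =
  fixes m r :: "'a::order \<Rightarrow> 'a \<Rightarrow> 'a" and z u :: 'a
  assumes left_res: "left_res_pogroupoid m r z u"
begin

lemma bot_le: "z \<le> x" and le_top: "x \<le> u" and mult_top_left: "m u x = x"
  and mult_top_right: "m x u = x" and residuation: "m x y \<le> w \<longleftrightarrow> x \<le> r w y"
  using left_res unfolding left_res_pogroupoid_def by auto

lemma mult_residual_le: "m (r w y) y \<le> w"
  using residuation by blast

lemma residual_eq_top: "y \<le> w \<Longrightarrow> r w y = u"
  by (metis antisym le_top residuation mult_top_left)

lemma residual_mono_left: "w \<le> w' \<Longrightarrow> r w y \<le> r w' y"
  by (metis order_trans residuation order_refl)

lemma neg_top: "neg r z u = z"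
  using mult_residual_le[of z u] by (simp add: neg_def mult_top_right antisym bot_le)

end

locale involutive_comm_pogroupoid = left_res_pogroupoid_on +
  assumes neg_neg: "neg r z (neg r z x) = x"
    and imp_comm: "imp r z (imp r z x y) y = imp r z (imp r z y x) x"
begin

lemma imp_neg_neg: "imp r z (neg r z x) (neg r z y) = r x y"
  by (simp add: imp_def neg_neg)

lemma neg_antimono:
  assumes "x \<le> y"
  shows "neg r z y \<le> neg r z x"
proof -
  have "neg r z (r y x) = z"
    using residual_eq_top[OF assms] neg_top by simp
  then have "neg r z x = r (neg r z (r x y)) y"
    using imp_comm[of "neg r z y" "neg r z x"] by (simp add: imp_neg_neg imp_def neg_neg, simp add: neg_def)
  moreover have "m (neg r z y) y \<le> neg r z (r x y)"
    using mult_residual_le[of z y] bot_le order_trans by (fastforce simp: neg_def)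
  ultimately show ?thesis
    using residuation by simp
qed

lemma imp_antimono_left: "x \<le> x' \<Longrightarrow> imp r z x' y \<le> imp r z x y"
  by (simp add: imp_def neg_antimono residual_mono_left)

lemma imp_eq_top: "x \<le> y \<Longrightarrow> imp r z x y = u"
  by (simp add: imp_def neg_antimono residual_eq_top)

lemma top_imp: "imp r z u a = a"
  by (metis imp_def neg_top neg_def neg_neg)

lemma le_imp: "a \<le> imp r z x a"
  by (metis top_imp imp_antimono_left le_top)

lemma imp_imp_eq: "a \<le> x \<Longrightarrow> imp r z (imp r z x a) a = x"
  by (metis imp_comm imp_eq_top top_imp)

lemma imp_imp_least: "x \<le> w \<Longrightarrow> y \<le> w \<Longrightarrow> imp r z (imp r z x y) y \<le> w"
  by (metis imp_antimono_left imp_imp_eq)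

end

theorem lemma4:
  fixes m r :: "'a::order \<Rightarrow> 'a \<Rightarrow> 'a" and z u :: 'a
  assumes G: "left_res_pogroupoid m r z u"
    and dn: "\<And>x. neg r z (neg r z x) = x"
    and comm: "\<And>x y. imp r z (imp r z x y) y = imp r z (imp r z y x) x"
  shows "(\<forall>x y. x \<le> imp r z (imp r z x y) y \<and> y \<le> imp r z (imp r z x y) y \<and>
            (\<forall>w. x \<le> w \<and> y \<le> w \<longrightarrow> imp r z (imp r z x y) y \<le> w))
       \<and> (\<forall>a x. a \<le> x \<longrightarrow> a \<le> imp r z x a)
       \<and> (\<forall>a x y. a \<le> x \<longrightarrow> a \<le> y \<longrightarrow> x \<le> y \<longrightarrow> imp r z y a \<le> imp r z x a)
       \<and> (\<forall>a x. a \<le> x \<longrightarrow> imp r z (imp r z x a) a = x)"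
proof -
  interpret involutive_comm_pogroupoid m r z u
    using G dn comm by unfold_locales auto
  show ?thesis
  proof (intro conjI allI impI)
    fix x y :: 'a
    show "x \<le> imp r z (imp r z x y) y"
      using le_imp imp_comm by metis
  qed (auto intro: le_imp imp_imp_least imp_antimono_left imp_imp_eq)
qed

end
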